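(* Let $(L_x)_{x\in S}$ be an $S$-glued system with $S$-glued sum $L$. If every $L_x$ is semimodular, then $L$ is a semimodular lattice of finite length. If every $L_x$ is modular, then $L$ is a modular lattice of finite length.
   Context: Let $S$ be a lattice of finite length (every chain in $S$ is finite), with order $\le$, join $\vee$ and meet $\wedge$; $x\prec y$ means that $y$ covers $x$. An \emph{$S$-glued system} is a family $(L_x,\le_x)_{x\in S}$ of lattices of finite length (with join $+_x$, meet $\cdot_x$, least element $0_x$, greatest element $1_x$), whose underlying sets may overlap, such that for all $x,y\in S$: (1) if $x\le y$ and $L_x\cap L_y\ne\emptyset$, then $L_x\cap L_y$ is a filter of $L_x$ and an ideal of $L_y$; (2) in the situation of (1), for all $a,b\in L_x\cap L_y$: $a\le_x b$ iff $a\le_y b$; (3) if $x\prec y$ then $L_x\cap L_y\ne\emptyset$; (4) $L_x\cap L_y\subseteq L_{x\wedge y}\cap L_{x\vee y}$. The \emph{$S$-glued sum} of the system is the set $L=\bigcup_{x\in S}L_x$ equipped with the relation $\le$ defined as the transitive closure of $\bigcup_{x\in S}\le_x$; it is a lattice. A lattice $K$ of finite length is \emph{semimodular} if whenever $b\ne c$ both cover $a$ in $K$, then $b\vee c$ covers both $b$ and $c$. A lattice has finite length if all its chains are finite. *)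

theory Defs
  imports Main
begin

definition order_on :: "'a set \<Rightarrow> ('a \<Rightarrow> 'a \<Rightarrow> bool) \<Rightarrow> bool" where
  "order_on A le \<longleftrightarrow>
     (\<forall>a\<in>A. le a a) \<and>
     (\<forall>a\<in>A. \<forall>b\<in>A. le a b \<and> le b a \<longrightarrow> a = b) \<and>
     (\<forall>a\<in>A. \<forall>b\<in>A. \<forall>c\<in>A. le a b \<and> le b c \<longrightarrow> le a c)"

definition is_lub :: "'a set \<Rightarrow> ('a \<Rightarrow> 'a \<Rightarrow> bool) \<Rightarrow> 'a \<Rightarrow> 'a \<Rightarrow> 'a \<Rightarrow> bool" where
  "is_lub A le a b z \<longleftrightarrow> z \<in> A \<and> le a z \<and> le b z \<and> (\<forall>w\<in>A. le a w \<and> le b w \<longrightarrow> le z w)"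

definition is_glb :: "'a set \<Rightarrow> ('a \<Rightarrow> 'a \<Rightarrow> bool) \<Rightarrow> 'a \<Rightarrow> 'a \<Rightarrow> 'a \<Rightarrow> bool" where
  "is_glb A le a b z \<longleftrightarrow> z \<in> A \<and> le z a \<and> le z b \<and> (\<forall>w\<in>A. le w a \<and> le w b \<longrightarrow> le w z)"

definition ljoin :: "'a set \<Rightarrow> ('a \<Rightarrow> 'a \<Rightarrow> bool) \<Rightarrow> 'a \<Rightarrow> 'a \<Rightarrow> 'a" where
  "ljoin A le a b = (THE z. is_lub A le a b z)"

definition lmeet :: "'a set \<Rightarrow> ('a \<Rightarrow> 'a \<Rightarrow> bool) \<Rightarrow> 'a \<Rightarrow> 'a \<Rightarrow> 'a" where
  "lmeet A le a b = (THE z. is_glb A le a b z)"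

definition lattice_on :: "'a set \<Rightarrow> ('a \<Rightarrow> 'a \<Rightarrow> bool) \<Rightarrow> bool" where
  "lattice_on A le \<longleftrightarrow> order_on A le \<and> A \<noteq> {} \<and>
     (\<forall>a\<in>A. \<forall>b\<in>A. (\<exists>z. is_lub A le a b z) \<and> (\<exists>z. is_glb A le a b z))"

definition finite_length :: "'a set \<Rightarrow> ('a \<Rightarrow> 'a \<Rightarrow> bool) \<Rightarrow> bool" where
  "finite_length A le \<longleftrightarrow>
     (\<forall>Ch. Ch \<subseteq> A \<and> (\<forall>a\<in>Ch. \<forall>b\<in>Ch. le a b \<or> le b a) \<longrightarrow> finite Ch)"

definition fl_lattice :: "'a set \<Rightarrow> ('a \<Rightarrow> 'a \<Rightarrow> bool) \<Rightarrow> bool" where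
  "fl_lattice A le \<longleftrightarrow> lattice_on A le \<and> finite_length A le"

definition covers :: "'a set \<Rightarrow> ('a \<Rightarrow> 'a \<Rightarrow> bool) \<Rightarrow> 'a \<Rightarrow> 'a \<Rightarrow> bool" where
  "covers A le a b \<longleftrightarrow> a \<in> A \<and> b \<in> A \<and> le a b \<and> a \<noteq> b \<and>
     \<not> (\<exists>z\<in>A. le a z \<and> le z b \<and> z \<noteq> a \<and> z \<noteq> b)"

definition semimodular_on :: "'a set \<Rightarrow> ('a \<Rightarrow> 'a \<Rightarrow> bool) \<Rightarrow> bool" where
  "semimodular_on A le \<longleftrightarrow>
     (\<forall>a b c. covers A le a b \<and> covers A le a c \<and> b \<noteq> c \<longrightarrow>
        covers A le b (ljoin A le b c) \<and> covers A le c (ljoin A le b c))"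

definition modular_on :: "'a set \<Rightarrow> ('a \<Rightarrow> 'a \<Rightarrow> bool) \<Rightarrow> bool" where
  "modular_on A le \<longleftrightarrow>
     (\<forall>a\<in>A. \<forall>b\<in>A. \<forall>c\<in>A. le a c \<longrightarrow>
        ljoin A le a (lmeet A le b c) = lmeet A le (ljoin A le a b) c)"

definition is_filter :: "'a set \<Rightarrow> ('a \<Rightarrow> 'a \<Rightarrow> bool) \<Rightarrow> 'a set \<Rightarrow> bool" where
  "is_filter A le F \<longleftrightarrow> F \<subseteq> A \<and> F \<noteq> {} \<and>
     (\<forall>a\<in>F. \<forall>b\<in>A. le a b \<longrightarrow> b \<in> F) \<and>
     (\<forall>a\<in>F. \<forall>b\<in>F. lmeet A le a b \<in> F)"

definition is_ideal :: "'a set \<Rightarrow> ('a \<Rightarrow> 'a \<Rightarrow> bool) \<Rightarrow> 'a set \<Rightarrow> bool" where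
  "is_ideal A le I \<longleftrightarrow> I \<subseteq> A \<and> I \<noteq> {} \<and>
     (\<forall>a\<in>I. \<forall>b\<in>A. le b a \<longrightarrow> b \<in> I) \<and>
     (\<forall>a\<in>I. \<forall>b\<in>I. ljoin A le a b \<in> I)"

definition scovers :: "'s::order \<Rightarrow> 's \<Rightarrow> bool" where
  "scovers x y \<longleftrightarrow> x < y \<and> \<not> (\<exists>z. x < z \<and> z < y)"

definition glued_system :: "('s::lattice \<Rightarrow> 'a set) \<Rightarrow> ('s \<Rightarrow> 'a \<Rightarrow> 'a \<Rightarrow> bool) \<Rightarrow> bool" where
  "glued_system C R \<longleftrightarrow>
     (\<forall>x. fl_lattice (C x) (R x)) \<and>
     (\<forall>x y. x \<le> y \<and> C x \<inter> C y \<noteq> {} \<longrightarrow>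
        is_filter (C x) (R x) (C x \<inter> C y) \<and> is_ideal (C y) (R y) (C x \<inter> C y)) \<and>
     (\<forall>x y. x \<le> y \<and> C x \<inter> C y \<noteq> {} \<longrightarrow>
        (\<forall>a\<in>C x \<inter> C y. \<forall>b\<in>C x \<inter> C y. R x a b \<longleftrightarrow> R y a b)) \<and>
     (\<forall>x y. scovers x y \<longrightarrow> C x \<inter> C y \<noteq> {}) \<and>
     (\<forall>x y. C x \<inter> C y \<subseteq> C (inf x y) \<inter> C (sup x y))"

definition glued_carrier :: "('s \<Rightarrow> 'a set) \<Rightarrow> 'a set" where
  "glued_carrier C = (\<Union>x. C x)"

definition glued_le :: "('s \<Rightarrow> 'a set) \<Rightarrow> ('s \<Rightarrow> 'a \<Rightarrow> 'a \<Rightarrow> bool) \<Rightarrow> 'a \<Rightarrow> 'a \<Rightarrow> bool" where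
  "glued_le C R = tranclp (\<lambda>a b. \<exists>x. a \<in> C x \<and> b \<in> C x \<and> R x a b)"

end

theory Submission
  imports Defs
begin

(*
  Every element a of the glued sum lies in the blocks C x for x in an interval [lowest a, highest a]
  of S.  An element of a block C x can be transported to any higher block C y by repeatedly joining
  it with the bottom of the highest block that still overlaps the current one; this transport is
  monotone and preserves joins.  Consequently a \<le> c holds in the glued sum iff the transport of a
  into a block containing c lies below c there.  This makes the glued sum a lattice of finite length
  in which every covering pair lies in a single block, so semimodularity and its dual pass from the
  blocks to the sum.  Modularity follows, since in a lattice of finite length it amounts to
  semimodularity together with its dual.
*)

section \<open>Lattices of finite length\<close>

lemma order_onD:
  assumes "order_on A le"
  shows "a \<in> A \<Longrightarrow> le a a"
    and "a \<in> A \<Longrightarrow> b \<in> A \<Longrightarrow> le a b \<Longrightarrow> le b a \<Longrightarrow> a = b"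
    and "a \<in> A \<Longrightarrow> b \<in> A \<Longrightarrow> c \<in> A \<Longrightarrow> le a b \<Longrightarrow> le b c \<Longrightarrow> le a c"
  using assms unfolding order_on_def by blast+

lemma finite_length_wf:
  assumes ord: "order_on A le" and fin: "finite_length A le"
  shows "wf {(x, y). x \<in> A \<and> y \<in> A \<and> le x y \<and> x \<noteq> y}"
proof (rule ccontr)
  assume "\<not> ?thesis"
  then obtain g where g: "\<And>i. g (Suc i) \<in> A \<and> g i \<in> A \<and> le (g (Suc i)) (g i) \<and> g (Suc i) \<noteq> g i"
    unfolding wf_iff_no_infinite_down_chain by blast
  have A: "g i \<in> A" for i
    using g by blast
  have desc: "i \<le> j \<Longrightarrow> le (g j) (g i)" for i j
  proof (induction j rule: dec_induct)
    case base
    show ?case using A order_onD(1)[OF ord] by blast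
  next
    case (step j)
    then show ?case using g[of j] A order_onD(3)[OF ord] by blast
  qed
  have "g i \<noteq> g j" if "i < j" for i j
  proof
    assume "g i = g j"
    then have "le (g i) (g (Suc i))" using desc[of "Suc i" j] that by simp
    then show False using g[of i] order_onD(2)[OF ord] by blast
  qed
  then have "inj g"
    by (metis injI linorder_neqE_nat)
  moreover have "finite (range g)"
  proof -
    have "le a b \<or> le b a" if "a \<in> range g" "b \<in> range g" for a b
      using that desc nat_le_linear by blast
    moreover have "range g \<subseteq> A"
      using A by blast
    ultimately show ?thesis
      using fin unfolding finite_length_def by blast
  qed
  ultimately show False
    using finite_imageD by blast
qed

lemma order_on_converse: "order_on A le \<Longrightarrow> order_on A (\<lambda>x y. le y x)"
  unfolding order_on_def by blast

lemma finite_length_converse: "finite_length A le \<Longrightarrow> finite_length A (\<lambda>x y. le y x)"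
  unfolding finite_length_def by blast

lemma is_lub_converse: "is_lub A (\<lambda>x y. le y x) a b z = is_glb A le a b z"
  unfolding is_lub_def is_glb_def by simp

lemma is_glb_converse: "is_glb A (\<lambda>x y. le y x) a b z = is_lub A le a b z"
  unfolding is_lub_def is_glb_def by simp

lemma ljoin_converse: "ljoin A (\<lambda>x y. le y x) = lmeet A le"
  unfolding ljoin_def lmeet_def is_lub_converse by simp

lemma lmeet_converse: "lmeet A (\<lambda>x y. le y x) = ljoin A le"
  unfolding ljoin_def lmeet_def is_glb_converse by simp

lemma covers_converse: "covers A (\<lambda>x y. le y x) a b = covers A le b a"
  unfolding covers_def by blast

lemma fl_lattice_converse: "fl_lattice A le \<Longrightarrow> fl_lattice A (\<lambda>x y. le y x)"
  unfolding fl_lattice_def lattice_on_def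
  using order_on_converse finite_length_converse is_lub_converse is_glb_converse by metis

lemma finite_length_wf_converse:
  assumes "order_on A le" and "finite_length A le"
  shows "wf {(x, y). x \<in> A \<and> y \<in> A \<and> le y x \<and> x \<noteq> y}"
  using finite_length_wf[OF order_on_converse finite_length_converse, OF assms] .

lemma tranclp_first_step:
  assumes "r\<^sup>+\<^sup>+ a b" "a \<noteq> b"
  shows "\<exists>e. r a e \<and> e \<noteq> a \<and> (e = b \<or> r\<^sup>+\<^sup>+ e b)"
  using assms
proof (induction rule: converse_tranclp_induct)
  case (step a e)
  then show ?case
    by (cases "e = a") auto
qed blast

lemma finite_length_ex_glb:
  assumes ord: "order_on A le" and fin: "finite_length A le"
    and bot: "B \<in> A" "\<forall>x \<in> A. le B x"
    and lub: "\<And>a b. a \<in> A \<Longrightarrow> b \<in> A \<Longrightarrow> \<exists>z. is_lub A le a b z"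
    and a: "a \<in> A" and b: "b \<in> A"
  shows "\<exists>z. is_glb A le a b z"
proof -
  let ?LB = "{l \<in> A. le l a \<and> le l b}"
  have "B \<in> ?LB"
    using bot a b by blast
  then obtain m where m: "m \<in> ?LB"
    and max: "\<And>z. (z, m) \<in> {(x, y). x \<in> A \<and> y \<in> A \<and> le y x \<and> x \<noteq> y} \<Longrightarrow> z \<notin> ?LB"
    by (rule wfE_min[OF finite_length_wf_converse[OF ord fin]]) blast+
  have "le l m" if l: "l \<in> ?LB" for l
  proof -
    obtain j where "is_lub A le m l j"
      using lub m l by blast
    then have j: "j \<in> A" "le m j" "le l j" "le j a" "le j b"
      using a b m l unfolding is_lub_def by auto
    then have "(j, m) \<notin> {(x, y). x \<in> A \<and> y \<in> A \<and> le y x \<and> x \<noteq> y}"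
      using max[of j] by blast
    then have "j = m"
      using j m by blast
    then show ?thesis
      using j by simp
  qed
  then have "is_glb A le a b m"
    using m unfolding is_glb_def by blast
  then show ?thesis ..
qed

locale finite_length_lattice =
  fixes A :: "'a set" and le :: "'a \<Rightarrow> 'a \<Rightarrow> bool"
  assumes fl: "fl_lattice A le"
begin

abbreviation join where "join \<equiv> ljoin A le"
abbreviation meet where "meet \<equiv> lmeet A le"
abbreviation cov where "cov \<equiv> covers A le"

lemma ord: "order_on A le" and lattice: "lattice_on A le" and fin: "finite_length A le"
  using fl unfolding fl_lattice_def lattice_on_def by auto

lemma refl: "a \<in> A \<Longrightarrow> le a a"
  using order_onD(1)[OF ord] .

lemma antisym: "a \<in> A \<Longrightarrow> b \<in> A \<Longrightarrow> le a b \<Longrightarrow> le b a \<Longrightarrow> a = b"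
  using order_onD(2)[OF ord] .

lemma trans: "a \<in> A \<Longrightarrow> b \<in> A \<Longrightarrow> c \<in> A \<Longrightarrow> le a b \<Longrightarrow> le b c \<Longrightarrow> le a c"
  using order_onD(3)[OF ord] .

lemma nonempty: "A \<noteq> {}"
  using lattice unfolding lattice_on_def by auto

lemma is_lub_unique: "is_lub A le a b z \<Longrightarrow> is_lub A le a b z' \<Longrightarrow> z = z'"
  unfolding is_lub_def using antisym by blast

lemma is_glb_unique: "is_glb A le a b z \<Longrightarrow> is_glb A le a b z' \<Longrightarrow> z = z'"
  unfolding is_glb_def using antisym by blast

lemma join_is_lub: "a \<in> A \<Longrightarrow> b \<in> A \<Longrightarrow> is_lub A le a b (join a b)"
  unfolding ljoin_def
  by (rule theI') (use lattice is_lub_unique in \<open>auto simp: lattice_on_def\<close>)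

lemma meet_is_glb: "a \<in> A \<Longrightarrow> b \<in> A \<Longrightarrow> is_glb A le a b (meet a b)"
  unfolding lmeet_def
  by (rule theI') (use lattice is_glb_unique in \<open>auto simp: lattice_on_def\<close>)

lemma join_eq: "is_lub A le a b z \<Longrightarrow> a \<in> A \<Longrightarrow> b \<in> A \<Longrightarrow> join a b = z"
  using join_is_lub is_lub_unique by blast

lemma meet_eq: "is_glb A le a b z \<Longrightarrow> a \<in> A \<Longrightarrow> b \<in> A \<Longrightarrow> meet a b = z"
  using meet_is_glb is_glb_unique by blast

lemma join_in: "a \<in> A \<Longrightarrow> b \<in> A \<Longrightarrow> join a b \<in> A"
  and join_upper1: "a \<in> A \<Longrightarrow> b \<in> A \<Longrightarrow> le a (join a b)"
  and join_upper2: "a \<in> A \<Longrightarrow> b \<in> A \<Longrightarrow> le b (join a b)"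
  and join_least: "a \<in> A \<Longrightarrow> b \<in> A \<Longrightarrow> w \<in> A \<Longrightarrow> le a w \<Longrightarrow> le b w \<Longrightarrow> le (join a b) w"
  using join_is_lub[of a b] unfolding is_lub_def by blast+

lemma meet_in: "a \<in> A \<Longrightarrow> b \<in> A \<Longrightarrow> meet a b \<in> A"
  and meet_lower1: "a \<in> A \<Longrightarrow> b \<in> A \<Longrightarrow> le (meet a b) a"
  and meet_lower2: "a \<in> A \<Longrightarrow> b \<in> A \<Longrightarrow> le (meet a b) b"
  and meet_greatest: "a \<in> A \<Longrightarrow> b \<in> A \<Longrightarrow> w \<in> A \<Longrightarrow> le w a \<Longrightarrow> le w b \<Longrightarrow> le w (meet a b)"
  using meet_is_glb[of a b] unfolding is_glb_def by blast+

lemma join_commute: "a \<in> A \<Longrightarrow> b \<in> A \<Longrightarrow> join a b = join b a"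
  by (intro join_eq) (auto simp: is_lub_def intro: join_in join_upper1 join_upper2 join_least)

lemma meet_commute: "a \<in> A \<Longrightarrow> b \<in> A \<Longrightarrow> meet a b = meet b a"
  by (intro meet_eq) (auto simp: is_glb_def intro: meet_in meet_lower1 meet_lower2 meet_greatest)

lemma join_absorb2: "a \<in> A \<Longrightarrow> b \<in> A \<Longrightarrow> le a b \<Longrightarrow> join a b = b"
  by (intro join_eq) (auto simp: is_lub_def intro: refl)

lemma meet_absorb1: "a \<in> A \<Longrightarrow> b \<in> A \<Longrightarrow> le a b \<Longrightarrow> meet a b = a"
  by (intro meet_eq) (auto simp: is_glb_def intro: refl)

lemma join_le_iff: "a \<in> A \<Longrightarrow> b \<in> A \<Longrightarrow> w \<in> A \<Longrightarrow> le (join a b) w \<longleftrightarrow> le a w \<and> le b w"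
  by (meson join_in join_least join_upper1 join_upper2 trans)

lemma eq_iff_same_upper_bounds:
  assumes "a \<in> A" "b \<in> A" "\<And>w. w \<in> A \<Longrightarrow> le a w \<longleftrightarrow> le b w"
  shows "a = b"
  using assms refl antisym by blast

lemma join_assoc:
  assumes "a \<in> A" "b \<in> A" "c \<in> A"
  shows "join (join a b) c = join a (join b c)"
  using assms by (intro eq_iff_same_upper_bounds) (auto simp: join_in join_le_iff)

lemma join_join_distrib:
  assumes "a \<in> A" "b \<in> A" "c \<in> A"
  shows "join (join a b) c = join (join a c) (join b c)"
  using assms by (intro eq_iff_same_upper_bounds) (auto simp: join_in join_le_iff)

lemma join_mono1:
  assumes "a \<in> A" "b \<in> A" "c \<in> A" "le a c"
  shows "le (join a b) (join c b)"
  using assms join_in join_least join_upper2 trans[OF _ _ _ _ join_upper1] by metis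

lemma meet_mono2:
  assumes "b \<in> A" "c \<in> A" "d \<in> A" "le c d"
  shows "le (meet b c) (meet b d)"
  using assms meet_in meet_greatest meet_lower1 trans[OF _ _ _ meet_lower2] by metis

lemma join_eq_if_between:
  assumes "x \<in> A" "y \<in> A" "b \<in> A" "le x y" "le y (join x b)"
  shows "join y b = join x b"
proof (rule antisym)
  show "le (join y b) (join x b)"
    using assms join_least join_in join_upper2 by blast
  show "le (join x b) (join y b)"
    using join_mono1 assms by blast
qed (use assms join_in in blast)+

lemma wf_less: "wf {(x, y). x \<in> A \<and> y \<in> A \<and> le x y \<and> x \<noteq> y}"
  using finite_length_wf[OF ord fin] .

lemma wf_greater: "wf {(x, y). x \<in> A \<and> y \<in> A \<and> le y x \<and> x \<noteq> y}"
  using finite_length_wf_converse[OF ord fin] .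

lemma coversD: "cov a b \<Longrightarrow> a \<in> A \<and> b \<in> A \<and> le a b \<and> a \<noteq> b"
  unfolding covers_def by auto

lemma covers_between: "cov a b \<Longrightarrow> z \<in> A \<Longrightarrow> le a z \<Longrightarrow> le z b \<Longrightarrow> z = a \<or> z = b"
  unfolding covers_def by auto

lemma ex_cover_above:
  assumes "a \<in> A" "b \<in> A" "le a b" "a \<noteq> b"
  shows "\<exists>c. cov a c \<and> le c b"
proof -
  let ?X = "{c \<in> A. le a c \<and> le c b \<and> c \<noteq> a}"
  have "b \<in> ?X" using assms refl by auto
  then obtain c where c: "c \<in> ?X"
    and min: "\<And>z. (z, c) \<in> {(x, y). x \<in> A \<and> y \<in> A \<and> le x y \<and> x \<noteq> y} \<Longrightarrow> z \<notin> ?X"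
    by (rule wfE_min[OF wf_less]) blast+
  have "cov a c"
    unfolding covers_def using c min assms trans by blast
  then show ?thesis using c by blast
qed

lemma ex_cover_below:
  assumes "a \<in> A" "b \<in> A" "le a b" "a \<noteq> b"
  shows "\<exists>c. cov c b \<and> le a c"
proof -
  let ?X = "{c \<in> A. le a c \<and> le c b \<and> c \<noteq> b}"
  have "a \<in> ?X" using assms refl by auto
  then obtain c where c: "c \<in> ?X"
    and max: "\<And>z. (z, c) \<in> {(x, y). x \<in> A \<and> y \<in> A \<and> le y x \<and> x \<noteq> y} \<Longrightarrow> z \<notin> ?X"
    by (rule wfE_min[OF wf_greater]) blast+
  have "cov c b"
    unfolding covers_def using c max assms trans by blast
  then show ?thesis using c by blast
qed

definition bottom where "bottom = (THE t. t \<in> A \<and> (\<forall>a \<in> A. le t a))"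
definition top where "top = (THE t. t \<in> A \<and> (\<forall>a \<in> A. le a t))"

lemma bottom_in: "bottom \<in> A" and bottom_le: "a \<in> A \<Longrightarrow> le bottom a"
proof -
  obtain a0 where "a0 \<in> A"
    using nonempty by auto
  then obtain t where t: "t \<in> A"
    and min: "\<And>z. (z, t) \<in> {(x, y). x \<in> A \<and> y \<in> A \<and> le x y \<and> x \<noteq> y} \<Longrightarrow> z \<notin> A"
    by (rule wfE_min[OF wf_less]) blast+
  have "meet t a = t" if "a \<in> A" for a
    using min[of "meet t a"] t that meet_in meet_lower1 by blast
  then have t_bottom: "t \<in> A \<and> (\<forall>a \<in> A. le t a)"
    using t meet_lower2 by metis
  then have "bottom \<in> A \<and> (\<forall>a \<in> A. le bottom a)"
    unfolding bottom_def by (rule theI) (use antisym t_bottom in blast)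
  then show "bottom \<in> A" "a \<in> A \<Longrightarrow> le bottom a"
    by blast+
qed

lemma top_in: "top \<in> A" and top_ge: "a \<in> A \<Longrightarrow> le a top"
proof -
  obtain a0 where "a0 \<in> A"
    using nonempty by auto
  then obtain t where t: "t \<in> A"
    and max: "\<And>z. (z, t) \<in> {(x, y). x \<in> A \<and> y \<in> A \<and> le y x \<and> x \<noteq> y} \<Longrightarrow> z \<notin> A"
    by (rule wfE_min[OF wf_greater]) blast+
  have "join t a = t" if "a \<in> A" for a
    using max[of "join t a"] t that join_in join_upper1 by blast
  then have t_top: "t \<in> A \<and> (\<forall>a \<in> A. le a t)"
    using t join_upper2 by metis
  then have "top \<in> A \<and> (\<forall>a \<in> A. le a top)"
    unfolding top_def by (rule theI) (use antisym t_top in blast)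
  then show "top \<in> A" "a \<in> A \<Longrightarrow> le a top"
    by blast+
qed

end

lemma finite_length_lattice_converse:
  "finite_length_lattice A le \<Longrightarrow> finite_length_lattice A (\<lambda>x y. le y x)"
  unfolding finite_length_lattice_def using fl_lattice_converse by blast

section \<open>Semimodularity and modularity\<close>

context finite_length_lattice
begin

text \<open>One step up from \<open>a \<sqinter> b\<close> towards \<open>b\<close>: the cover \<open>b\<^sub>1\<close> and \<open>a\<close> both cover \<open>a \<sqinter> b\<close>, so
  \<open>a' = a \<squnion> b\<^sub>1\<close> covers \<open>b\<^sub>1 = a' \<sqinter> b\<close>, while \<open>a' \<squnion> b = a \<squnion> b\<close>.\<close>
lemma semimodular_cover_meet_climb:
  assumes sm: "semimodular_on A le" and a: "a \<in> A" and b: "b \<in> A"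
    and cma: "cov (meet a b) a" and cb1: "cov (meet a b) b1" and b1b: "le b1 b"
  shows "cov b1 (join a b1)" "meet (join a b1) b = b1" "join (join a b1) b = join a b"
proof -
  have b1: "b1 \<in> A"
    using coversD[OF cb1] by blast
  have ab: "\<not> le a b"
    using coversD[OF cma] meet_absorb1[OF a b] by metis
  then have "b1 \<noteq> a"
    using b1b by blast
  then show ca': "cov b1 (join a b1)"
    using sm cma cb1 unfolding semimodular_on_def by blast
  define a' where "a' = join a b1"
  have a': "a' \<in> A" "le a a'"
    unfolding a'_def using a b1 join_in join_upper1 by blast+
  have "le b1 (meet a' b)"
    using meet_greatest[OF a'(1) b b1] coversD[OF ca'] b1b a'_def by blast
  moreover have "meet a' b \<noteq> a'"
  proof
    assume "meet a' b = a'"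
    then have "le a' b"
      using meet_lower2[OF a'(1) b] by simp
    then show False
      using ab trans[OF a a'(1) b a'(2)] by blast
  qed
  ultimately have "meet a' b = b1"
    using covers_between[OF ca', of "meet a' b"] meet_in[OF a'(1) b] meet_lower1[OF a'(1) b] a'_def
    by blast
  then show "meet (join a b1) b = b1"
    unfolding a'_def .
  show "join (join a b1) b = join a b"
    using join_assoc[OF a b1 b] join_absorb2[OF b1 b b1b] by simp
qed

lemma semimodular_cover_meet_imp_cover_join:
  assumes sm: "semimodular_on A le" and "a \<in> A" and b: "b \<in> A" and "cov (meet a b) a"
  shows "cov b (join a b)"
  using assms(2,4)
proof (induction "meet a b" arbitrary: a rule: wf_induct_rule[OF wf_greater])
  case (1 a)
  have m: "meet a b \<in> A" "le (meet a b) b"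
    using meet_in[OF "1.prems"(1) b] meet_lower2[OF "1.prems"(1) b] .
  show ?case
  proof (cases "meet a b = b")
    case True
    then show ?thesis
      using "1.prems" join_absorb2 join_commute b meet_lower1 by metis
  next
    case False
    then obtain b1 where cb1: "cov (meet a b) b1" and b1b: "le b1 b"
      using ex_cover_above[OF m(1) b m(2) False] by blast
    note climb = semimodular_cover_meet_climb[OF sm "1.prems"(1) b "1.prems"(2) cb1 b1b]
    have "(b1, meet a b) \<in> {(x, y). x \<in> A \<and> y \<in> A \<and> le y x \<and> x \<noteq> y}"
      using coversD[OF cb1] by auto
    then have "cov b (join (join a b1) b)"
      using "1.hyps"[of "join a b1"] climb(1,2) coversD[OF climb(1)] by simp
    then show ?thesis
      using climb(3) by simp
  qed
qed

lemma semimodular_join_cover: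
  assumes sm: "semimodular_on A le" and cxd: "cov x d" and b: "b \<in> A"
  shows "join x b = join d b \<or> cov (join x b) (join d b)"
proof -
  have x: "x \<in> A" and d: "d \<in> A" and xd: "le x d"
    using coversD[OF cxd] by auto
  have p: "join x b \<in> A"
    using join_in[OF x b] .
  show ?thesis
  proof (cases "le d (join x b)")
    case True
    then show ?thesis
      using join_eq_if_between[OF x d b xd] by simp
  next
    case False
    text \<open>Then \<open>d \<sqinter> (x \<squnion> b) = x\<close> is covered by \<open>d\<close>, so semimodularity lifts the cover.\<close>
    have "le x (meet d (join x b))"
      using meet_greatest[OF d p x] xd join_upper1[OF x b] by blast
    then have "meet d (join x b) = x"
      using covers_between[OF cxd meet_in[OF d p] _ meet_lower1[OF d p]] False meet_lower2[OF d p]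
      by metis
    then have "cov (join x b) (join d (join x b))"
      using semimodular_cover_meet_imp_cover_join[OF sm d p] cxd by simp
    moreover have "join d (join x b) = join d b"
      using join_assoc[OF d x b, symmetric] join_commute[OF d x] join_absorb2[OF x d xd] by simp
    ultimately show ?thesis by simp
  qed
qed

lemma lower_semimodular_cover_join_imp_cover_meet:
  assumes lsm: "semimodular_on A (\<lambda>x y. le y x)" and "a \<in> A" "b \<in> A" "cov a (join a b)"
  shows "cov (meet a b) b"
proof -
  interpret dual: finite_length_lattice A "\<lambda>x y. le y x"
    using finite_length_lattice_converse finite_length_lattice_axioms .
  have "cov a (join a b) \<Longrightarrow> cov (meet a b) b"
    using dual.semimodular_cover_meet_imp_cover_join[OF lsm \<open>a \<in> A\<close> \<open>b \<in> A\<close>]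
    by (simp only: ljoin_converse[of A le] lmeet_converse[of A le] covers_converse[of A le])
  then show ?thesis
    using assms(4) .
qed

lemma lower_semimodularD:
  assumes lsm: "semimodular_on A (\<lambda>x y. le y x)" and "cov g e" "cov d e" "g \<noteq> d"
  shows "cov (meet g d) g \<and> cov (meet g d) d"
proof -
  have "covers A (\<lambda>x y. le y x) e g \<and> covers A (\<lambda>x y. le y x) e d \<and> g \<noteq> d \<longrightarrow>
      covers A (\<lambda>x y. le y x) g (ljoin A (\<lambda>x y. le y x) g d) \<and>
      covers A (\<lambda>x y. le y x) d (ljoin A (\<lambda>x y. le y x) g d)"
    using lsm unfolding semimodular_on_def by (elim allE[of _ e] allE[of _ g] allE[of _ d])
  then show ?thesis
    using assms(2-4) unfolding ljoin_converse[of A le] covers_converse[of A le] by blast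
qed

text \<open>Semimodularity lifts \<open>x \<prec> d\<close> to \<open>x \<squnion> b \<prec> e \<squnion> b\<close>; lower semimodularity brings this
  down to \<open>g \<prec> e\<close> and then to \<open>x = g \<sqinter> d \<prec> g\<close>.\<close>
lemma bisemimodular_cover_exchange:
  assumes usm: "semimodular_on A le" and lsm: "semimodular_on A (\<lambda>x y. le y x)"
    and cxd: "cov x d" and cde: "cov d e" and b: "b \<in> A"
    and "join x b \<noteq> join d b" and jde: "join d b = join e b"
  shows "cov x (meet (join x b) e)" "cov (meet (join x b) e) e"
proof -
  have x: "x \<in> A" "le x d" and d: "d \<in> A" "le d e" and e: "e \<in> A"
    using coversD[OF cxd] coversD[OF cde] by auto
  define p where "p = join x b"
  have p: "p \<in> A" "le b p" "le x p"
    unfolding p_def using join_in join_upper1 join_upper2 x(1) b by blast+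
  have cpj: "cov p (join e b)"
    using semimodular_join_cover[OF usm cxd b] assms(6,7) p_def by simp
  have "join p e = join b e"
    using join_eq_if_between[OF b p(1) e p(2)] coversD[OF cpj] join_commute[OF b e] by simp
  then have "cov p (join p e)"
    using cpj join_commute[OF e b] by simp
  define g where "g = meet p e"
  have cge: "cov g e"
    unfolding g_def using lower_semimodular_cover_join_imp_cover_meet[OF lsm p(1) e] \<open>cov p (join p e)\<close> .
  have g: "g \<in> A" "le g p"
    unfolding g_def using meet_in meet_lower1 p(1) e by blast+
  have "g \<noteq> d"
  proof
    assume "g = d"
    then have "le (join d b) p"
      using join_least[OF d(1) b p(1)] g(2) p(2) by simp
    then show False
      using jde antisym[OF p(1) join_in[OF e b]] coversD[OF cpj] by auto
  qed
  then have "cov (meet g d) g" "cov (meet g d) d"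
    using lower_semimodularD[OF lsm cge cde] by auto
  moreover have "le x (meet g d)"
    using meet_greatest[OF g(1) d(1) x(1)] meet_greatest[OF p(1) e x(1)] p(3)
      trans[OF x(1) d(1) e x(2) d(2)] x(2) unfolding g_def by blast
  ultimately have "cov x g"
    using covers_between[OF cxd meet_in[OF g(1) d(1)]] meet_lower2[OF g(1) d(1)] coversD by metis
  then show "cov x (meet (join x b) e)" "cov (meet (join x b) e) e"
    using cge unfolding g_def p_def by simp_all
qed

text \<open>In a minimal counterexample \<open>d \<prec> e\<close>, the exchange lemma produces a counterexample below \<open>e\<close>.\<close>
lemma bisemimodular_cover_join_neq:
  assumes usm: "semimodular_on A le" and lsm: "semimodular_on A (\<lambda>x y. le y x)"
    and "cov d e" and b: "b \<in> A" and "le (meet b e) d"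
  shows "join d b \<noteq> join e b"
  using assms(3,5)
proof (induction e arbitrary: d rule: wf_induct_rule[OF wf_less])
  case (1 e d)
  have cde: "cov d e" and mbe: "le (meet b e) d"
    using "1.prems" by simp_all
  have d: "d \<in> A" "le d e" "d \<noteq> e" and e: "e \<in> A"
    using coversD[OF cde] by auto
  have IH: "join x b \<noteq> join y b" if "cov x y" "le y e" "y \<noteq> e" "le (meet b y) x" for x y
    using "1.IH"[of y x] that e coversD by blast
  show ?case
  proof
    assume jde: "join d b = join e b"
    show False
    proof (cases "meet b e = d")
      case True
      then have "cov b (join e b)"
        using semimodular_cover_meet_imp_cover_join[OF usm e b] cde meet_commute[OF b e] by simp
      moreover have "join e b = b"
        using True jde join_absorb2[OF d(1) b] meet_lower1[OF b e] by simp
      ultimately show False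
        using coversD by metis
    next
      case False
      obtain x where cxd: "cov x d" and mx: "le (meet b e) x"
        using ex_cover_below[OF meet_in[OF b e] d(1) mbe False] by blast
      have x: "x \<in> A"
        using coversD[OF cxd] by blast
      have meet_below: "le (meet b y) x" if "y \<in> A" "le y e" for y
        using trans[OF meet_in[OF b that(1)] meet_in[OF b e] x meet_mono2[OF b that(1) e that(2)] mx] .
      have "join x b \<noteq> join d b"
        using IH[OF cxd d(2,3) meet_below[OF d(1,2)]] .
      define g where "g = meet (join x b) e"
      have cxg: "cov x g" and cge: "cov g e"
        unfolding g_def using bisemimodular_cover_exchange[OF usm lsm cxd cde b] \<open>join x b \<noteq> join d b\<close> jde
        by blast+
      have g: "g \<in> A" "le g e" "g \<noteq> e" "le g (join x b)"
        using coversD[OF cge] meet_lower1[OF join_in[OF x b] e] g_def by auto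
      have "join x b \<noteq> join g b"
        using IH[OF cxg g(2,3) meet_below[OF g(1,2)]] .
      moreover have "join g b = join x b"
        using join_eq_if_between[OF x g(1) b] coversD[OF cxg] g(4) by blast
      ultimately show False
        by simp
    qed
  qed
qed

lemma bisemimodular_join_cancel:
  assumes usm: "semimodular_on A le" and lsm: "semimodular_on A (\<lambda>x y. le y x)"
    and b: "b \<in> A" and d: "d \<in> A" and e: "e \<in> A"
    and "le (meet b e) d" "le d e" "join d b = join e b"
  shows "d = e"
proof (rule ccontr)
  assume "d \<noteq> e"
  then obtain d' where cde: "cov d' e" and dd': "le d d'"
    using ex_cover_below[OF d e \<open>le d e\<close>] by blast
  have d': "d' \<in> A" "le d' e"
    using coversD[OF cde] by auto
  have "join d' b = join e b"
    using join_eq_if_between[OF d d'(1) b dd'] trans[OF d'(1) e join_in[OF e b] d'(2) join_upper1[OF e b]]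
      assms(8) by simp
  moreover have "le (meet b e) d'"
    using trans[OF meet_in[OF b e] d d'(1) assms(6) dd'] .
  ultimately show False
    using bisemimodular_cover_join_neq[OF usm lsm cde b] by blast
qed

lemma bisemimodular_imp_modular:
  assumes usm: "semimodular_on A le" and lsm: "semimodular_on A (\<lambda>x y. le y x)"
  shows "modular_on A le"
  unfolding modular_on_def
proof (intro ballI impI)
  fix a b c
  assume a: "a \<in> A" and b: "b \<in> A" and c: "c \<in> A" and ac: "le a c"
  define d where "d = join a (meet b c)"
  define e where "e = meet (join a b) c"
  have bc: "meet b c \<in> A" "le (meet b c) b" "le (meet b c) c"
    using meet_in meet_lower1 meet_lower2 b c by blast+
  have ab: "join a b \<in> A" "le a (join a b)" "le b (join a b)"
    using join_in join_upper1 join_upper2 a b by blast+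
  have bc_ab: "le (meet b c) (join a b)"
    using trans[OF bc(1) b ab(1) bc(2) ab(3)] .
  have d_in: "d \<in> A" "le a d" "le (meet b c) d" "le d (join a b)"
    unfolding d_def using join_in join_upper1 join_upper2 join_least a bc(1) ab(1) ab(2) bc_ab by blast+
  have e_in: "e \<in> A" "le a e" "le e (join a b)" "le e c"
    unfolding e_def using meet_in meet_greatest meet_lower1 meet_lower2 ab(1,2) c a ac by blast+
  have "le d e"
    unfolding d_def using join_least[OF a bc(1) e_in(1) e_in(2)]
      meet_greatest[OF ab(1) c bc(1) bc_ab bc(3)] e_def by simp
  moreover have "le (meet b e) d"
    using trans[OF meet_in[OF b e_in(1)] bc(1) d_in(1) meet_mono2[OF b e_in(1) c e_in(4)] d_in(3)] .
  moreover have "join d b = join e b"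
    using join_eq_if_between[OF a d_in(1) b d_in(2,4)] join_eq_if_between[OF a e_in(1) b e_in(2,3)] by simp
  ultimately have "d = e"
    using bisemimodular_join_cancel[OF usm lsm b d_in(1) e_in(1)] by blast
  then show "join a (meet b c) = meet (join a b) c"
    unfolding d_def e_def .
qed

lemma modular_cover_join:
  assumes modular: "modular_on A le" and cxa: "cov a x" and cya: "cov a y" and xy: "x \<noteq> y"
  shows "cov x (join x y)"
proof -
  have x: "x \<in> A" and y: "y \<in> A" "le a y" "a \<noteq> y" and a: "a \<in> A" "le a x"
    using cxa cya coversD by auto
  have j: "join x y \<in> A"
    using join_in[OF x y(1)] .
  have "x \<noteq> join x y"
  proof
    assume "x = join x y"
    then have "le y x" using join_upper2[OF x y(1)] by simp
    then show False using covers_between[OF cxa y(1) y(2)] y(3) xy by blast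
  qed
  moreover have "z = x \<or> z = join x y" if z: "z \<in> A" "le x z" "le z (join x y)" for z
  proof -
    text \<open>Modularity gives \<open>x \<squnion> (y \<sqinter> z) = z\<close>, and \<open>y \<sqinter> z\<close> is either \<open>a\<close> or \<open>y\<close>.\<close>
    have "join x (meet y z) = meet (join x y) z"
      using modular x y(1) z(1,2) unfolding modular_on_def by blast
    also have "\<dots> = z"
      using meet_commute[OF j z(1)] meet_absorb1[OF z(1) j z(3)] by simp
    finally have xyz: "join x (meet y z) = z" .
    have "le a (meet y z)"
      using meet_greatest[OF y(1) z(1) a(1) y(2)] trans[OF a(1) x z(1) a(2) z(2)] .
    then have "meet y z = a \<or> meet y z = y"
      using covers_between[OF cya meet_in[OF y(1) z(1)]] meet_lower1[OF y(1) z(1)] by blast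
    then show ?thesis
    proof
      assume "meet y z = a"
      then show ?thesis
        using xyz join_commute[OF x a(1)] join_absorb2[OF a(1) x a(2)] by simp
    next
      assume "meet y z = y"
      then have "le y z"
        using meet_lower2[OF y(1) z(1)] by metis
      then show ?thesis
        using antisym[OF z(1) j z(3)] join_least[OF x y(1) z(1) z(2)] by blast
    qed
  qed
  ultimately show ?thesis
    unfolding covers_def using x j join_upper1[OF x y(1)] by blast
qed

lemma modular_imp_semimodular:
  assumes "modular_on A le"
  shows "semimodular_on A le"
  unfolding semimodular_on_def
proof (intro allI impI)
  fix a b c assume h: "cov a b \<and> cov a c \<and> b \<noteq> c"
  then have "b \<in> A" "c \<in> A"
    using coversD by auto
  then show "cov b (join b c) \<and> cov c (join b c)"
    using modular_cover_join[OF assms] h join_commute by metis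
qed

lemma modular_converse:
  assumes modular: "modular_on A le"
  shows "modular_on A (\<lambda>x y. le y x)"
  unfolding modular_on_def ljoin_converse[of A le] lmeet_converse[of A le]
proof (intro ballI impI)
  fix a b c assume a: "a \<in> A" and b: "b \<in> A" and c: "c \<in> A" and ca: "le c a"
  have "join c (meet b a) = meet (join c b) a"
    using modular a b c ca unfolding modular_on_def by blast
  then show "meet a (join b c) = join (meet a b) c"
    using meet_commute[OF a join_in[OF b c]] join_commute[OF b c]
      join_commute[OF meet_in[OF a b] c] meet_commute[OF a b] by simp
qed

lemma modular_imp_lower_semimodular:
  assumes "modular_on A le"
  shows "semimodular_on A (\<lambda>x y. le y x)"
proof -
  interpret dual: finite_length_lattice A "\<lambda>x y. le y x"
    using finite_length_lattice_converse finite_length_lattice_axioms .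
  show ?thesis
    using dual.modular_imp_semimodular[OF modular_converse[OF assms]] .
qed

end

section \<open>Glued systems\<close>

locale glued_sum =
  fixes C :: "'s::lattice \<Rightarrow> 'a set" and R :: "'s \<Rightarrow> 'a \<Rightarrow> 'a \<Rightarrow> bool"
  assumes S_finite_length: "finite_length (UNIV :: 's set) (\<le>)"
    and glued: "glued_system C R"
begin

abbreviation overlap where "overlap x y \<equiv> C x \<inter> C y \<noteq> {}"
abbreviation bjoin where "bjoin x \<equiv> ljoin (C x) (R x)"
abbreviation bmeet where "bmeet x \<equiv> lmeet (C x) (R x)"

lemma block: "finite_length_lattice (C x) (R x)"
  using glued unfolding glued_system_def finite_length_lattice_def by simp

lemma overlap_filter: "x \<le> y \<Longrightarrow> overlap x y \<Longrightarrow> is_filter (C x) (R x) (C x \<inter> C y)"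
  and overlap_ideal: "x \<le> y \<Longrightarrow> overlap x y \<Longrightarrow> is_ideal (C y) (R y) (C x \<inter> C y)"
  and scovers_overlap: "scovers x y \<Longrightarrow> overlap x y"
  and overlap_inf_sup: "C x \<inter> C y \<subseteq> C (inf x y) \<inter> C (sup x y)"
  using glued unfolding glued_system_def by auto

lemma overlap_le_agree:
  assumes "x \<le> y" "a \<in> C x \<inter> C y" "b \<in> C x \<inter> C y"
  shows "R x a b \<longleftrightarrow> R y a b"
proof -
  have "overlap x y"
    using assms(2) by blast
  then show ?thesis
    using glued assms unfolding glued_system_def by blast
qed

lemmas block_refl = finite_length_lattice.refl[OF block]
  and block_antisym = finite_length_lattice.antisym[OF block]
  and block_trans = finite_length_lattice.trans[OF block]
  and block_join_in = finite_length_lattice.join_in[OF block]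
  and block_join_upper1 = finite_length_lattice.join_upper1[OF block]
  and block_join_upper2 = finite_length_lattice.join_upper2[OF block]
  and block_join_least = finite_length_lattice.join_least[OF block]
  and block_join_commute = finite_length_lattice.join_commute[OF block]
  and block_join_absorb2 = finite_length_lattice.join_absorb2[OF block]
  and block_join_assoc = finite_length_lattice.join_assoc[OF block]
  and block_join_eq = finite_length_lattice.join_eq[OF block]
  and block_join_join_distrib = finite_length_lattice.join_join_distrib[OF block]
  and block_meet_in = finite_length_lattice.meet_in[OF block]
  and block_meet_lower1 = finite_length_lattice.meet_lower1[OF block]
  and block_meet_lower2 = finite_length_lattice.meet_lower2[OF block]
  and block_meet_greatest = finite_length_lattice.meet_greatest[OF block]

lemma overlap_up_closed:
  assumes "x \<le> y" "a \<in> C x" "a \<in> C y" "b \<in> C x" "R x a b"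
  shows "b \<in> C y"
  using overlap_filter[OF assms(1)] assms(2-5) unfolding is_filter_def by blast

lemma overlap_down_closed:
  assumes "x \<le> y" "a \<in> C x" "a \<in> C y" "b \<in> C y" "R y b a"
  shows "b \<in> C x"
  using overlap_ideal[OF assms(1)] assms(2-5) unfolding is_ideal_def by blast

lemma overlap_join_closed:
  assumes "x \<le> y" "a \<in> C x" "a \<in> C y" "b \<in> C x" "b \<in> C y"
  shows "bjoin y a b \<in> C x"
  using overlap_ideal[OF assms(1)] assms(2-5) unfolding is_ideal_def by blast

lemma block_le_agree:
  assumes "a \<in> C x" "a \<in> C y" "b \<in> C x" "b \<in> C y"
  shows "R x a b \<longleftrightarrow> R y a b"
proof -
  have "a \<in> C (inf x y)" "b \<in> C (inf x y)"
    using overlap_inf_sup[of x y] assms by blast+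
  then show ?thesis
    using overlap_le_agree[of "inf x y" x a b] overlap_le_agree[of "inf x y" y a b] assms by simp
qed

lemma block_join_agree_le:
  assumes "x \<le> y" "a \<in> C x" "a \<in> C y" "b \<in> C x" "b \<in> C y"
  shows "bjoin x a b = bjoin y a b"
proof -
  let ?j = "bjoin y a b"
  have jy: "?j \<in> C y" and jx: "?j \<in> C x"
    using block_join_in assms(3,5) overlap_join_closed[OF assms] by blast+
  have "is_lub (C x) (R x) a b ?j"
    unfolding is_lub_def
  proof (intro conjI ballI impI)
    show "R x a ?j" "R x b ?j"
      using block_le_agree jx jy assms block_join_upper1 block_join_upper2 by blast+
    fix w assume w: "w \<in> C x" "R x a w \<and> R x b w"
    then have "w \<in> C y"
      using overlap_up_closed[OF assms(1,2,3)] by blast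
    then show "R x ?j w"
      using block_le_agree block_join_least jx jy w assms by meson
  qed (fact jx)
  then show ?thesis
    using block_join_eq assms(2,4) by blast
qed

lemma block_join_agree:
  assumes "a \<in> C x" "a \<in> C y" "b \<in> C x" "b \<in> C y"
  shows "bjoin x a b = bjoin y a b"
proof -
  have "a \<in> C (inf x y)" "b \<in> C (inf x y)"
    using overlap_inf_sup[of x y] assms by blast+
  then show ?thesis
    using block_join_agree_le[of "inf x y" x a b] block_join_agree_le[of "inf x y" y a b] assms by simp
qed

abbreviation bot_of where "bot_of x \<equiv> finite_length_lattice.bottom (C x) (R x)"
abbreviation top_of where "top_of x \<equiv> finite_length_lattice.top (C x) (R x)"

lemmas bot_of_in = finite_length_lattice.bottom_in[OF block]
  and bot_of_le = finite_length_lattice.bottom_le[OF block]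
  and top_of_in = finite_length_lattice.top_in[OF block]
  and top_of_ge = finite_length_lattice.top_ge[OF block]

lemma overlap_bot_of:
  assumes "x \<le> y" "overlap x y"
  shows "bot_of y \<in> C x"
  using assms overlap_down_closed[OF assms(1) _ _ bot_of_in bot_of_le] by blast

lemma overlap_top_of:
  assumes "x \<le> y" "overlap x y"
  shows "top_of x \<in> C y"
  using assms overlap_up_closed[OF assms(1) _ _ top_of_in top_of_ge] by blast

lemma overlap_iff_bot_of_le:
  assumes "x \<le> y" "overlap x y" "a \<in> C x"
  shows "a \<in> C y \<longleftrightarrow> R x (bot_of y) a"
  using assms overlap_bot_of block_le_agree bot_of_in bot_of_le overlap_up_closed by meson

lemma order_on_S: "order_on (UNIV :: 's set) (\<le>)"
  unfolding order_on_def by auto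

lemma wf_S_less: "wf {(x :: 's, y). x < y}"
  using finite_length_wf[OF order_on_S S_finite_length] by (rule wf_subset) (auto simp: less_le)

lemma wf_S_greater: "wf {(x :: 's, y). y < x}"
  using finite_length_wf_converse[OF order_on_S S_finite_length] by (rule wf_subset) (auto simp: less_le)

lemma ex_scovers:
  assumes "(x :: 's) < y"
  shows "\<exists>z. scovers x z \<and> z \<le> y"
proof -
  have "y \<in> {z. x < z \<and> z \<le> y}"
    using assms by simp
  then obtain z where z: "x < z" "z \<le> y"
    and min: "\<And>w. (w, z) \<in> {(x :: 's, y). x < y} \<Longrightarrow> w \<notin> {z. x < z \<and> z \<le> y}"
    by (rule wfE_min[OF wf_S_less]) blast+
  have "scovers x z"
    unfolding scovers_def using z min by fastforce
  then show ?thesis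
    using z by blast
qed

lemma inf_closed_ex_least:
  assumes "u \<in> X" "\<forall>a \<in> X. \<forall>b \<in> X. inf a b \<in> X"
  shows "\<exists>m \<in> X. \<forall>a \<in> X. m \<le> (a :: 's)"
proof -
  obtain m where m: "m \<in> X" and min: "\<And>w. (w, m) \<in> {(x :: 's, y). x < y} \<Longrightarrow> w \<notin> X"
    using assms(1) by (rule wfE_min[OF wf_S_less]) blast+
  have "m \<le> a" if "a \<in> X" for a
    using min[of "inf m a"] assms(2) m that inf.absorb_iff1 less_le by fastforce
  then show ?thesis
    using m by blast
qed

lemma sup_closed_ex_greatest:
  assumes "u \<in> X" "\<forall>a \<in> X. \<forall>b \<in> X. sup a b \<in> X"
  shows "\<exists>m \<in> X. \<forall>a \<in> X. a \<le> (m :: 's)"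
proof -
  obtain m where m: "m \<in> X" and max: "\<And>w. (w, m) \<in> {(x :: 's, y). y < x} \<Longrightarrow> w \<notin> X"
    using assms(1) by (rule wfE_min[OF wf_S_greater]) blast+
  have "a \<le> m" if "a \<in> X" for a
    using max[of "sup m a"] assms(2) m that sup.absorb_iff1 less_le by fastforce
  then show ?thesis
    using m by blast
qed

definition lowest where "lowest a = (LEAST x. a \<in> C x)"
definition highest where "highest a = (GREATEST x. a \<in> C x)"

lemma lowest:
  assumes "a \<in> C x"
  shows "a \<in> C (lowest a)" "lowest a \<le> x"
proof -
  obtain m where m: "a \<in> C m" "\<forall>u. a \<in> C u \<longrightarrow> m \<le> u"
    using inf_closed_ex_least[of x "{u. a \<in> C u}"] assms overlap_inf_sup by blast
  have "a \<in> C (lowest a) \<and> lowest a \<le> x"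
    unfolding lowest_def by (rule LeastI2_order[of _ m]) (use m assms in auto)
  then show "a \<in> C (lowest a)" "lowest a \<le> x"
    by auto
qed

lemma highest:
  assumes "a \<in> C x"
  shows "a \<in> C (highest a)" "x \<le> highest a"
proof -
  obtain m where m: "a \<in> C m" "\<forall>u. a \<in> C u \<longrightarrow> u \<le> m"
    using sup_closed_ex_greatest[of x "{u. a \<in> C u}"] assms overlap_inf_sup by blast
  have "a \<in> C (highest a) \<and> x \<le> highest a"
    unfolding highest_def by (rule GreatestI2_order[of _ m]) (use m assms in auto)
  then show "a \<in> C (highest a)" "x \<le> highest a"
    by auto
qed

lemma overlap_between:
  assumes "u \<le> z" "z \<le> v" "overlap u v"
  shows "overlap u z"
  using assms(1,2)
proof (induction z rule: wf_induct_rule[OF wf_S_greater])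
  case (1 z)
  show ?case
  proof (cases "z = v")
    case True
    then show ?thesis using assms(3) by simp
  next
    case False
    text \<open>Step up to a cover \<open>z'\<close> of \<open>z\<close>: \<open>C u\<close> meets \<open>C z'\<close> by induction and \<open>C z\<close>
      meets \<open>C z'\<close> by gluing, and \<open>bot_of z'\<close> lies in both intersections.\<close>
    then have "z < v"
      using "1.prems" by simp
    then obtain z' where sc: "scovers z z'" and z'v: "z' \<le> v"
      using ex_scovers by blast
    have zz': "z < z'"
      using sc unfolding scovers_def by blast
    have "overlap u z'"
      using "1.IH"[of z'] zz' "1.prems" z'v by auto
    then have "bot_of z' \<in> C u" "bot_of z' \<in> C z"
      using overlap_bot_of scovers_overlap[OF sc] "1.prems" zz' by auto
    then show ?thesis by blast
  qed
qed

lemma overlap_between':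
  assumes "u \<le> z" "z \<le> v" "overlap u v"
  shows "overlap z v"
proof -
  have "top_of u \<in> C z" "top_of u \<in> C v"
    using overlap_top_of[OF assms(1) overlap_between[OF assms]]
      overlap_top_of[OF order.trans[OF assms(1,2)] assms(3)] by blast+
  then show ?thesis by blast
qed

lemma block_convex:
  assumes "a \<in> C u" "a \<in> C v" "u \<le> z" "z \<le> v"
  shows "a \<in> C z"
proof -
  have uv: "u \<le> v" "overlap u v"
    using assms by auto
  have uz: "overlap u z" and zv: "overlap z v"
    using overlap_between overlap_between' assms(3,4) uv(2) by blast+
  have bz: "bot_of z \<in> C u" and bv: "bot_of v \<in> C u" "bot_of v \<in> C z"
    using overlap_bot_of assms(3,4) uv uz zv by blast+
  have "R u (bot_of z) (bot_of v)"
    using bot_of_le[OF bv(2)] block_le_agree[OF bz bot_of_in bv] by blast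
  moreover have "R u (bot_of v) a"
    using bot_of_le[OF assms(2)] block_le_agree[OF bv(1) bot_of_in assms(1,2)] by blast
  ultimately have "R u (bot_of z) a"
    using block_trans[OF bz bv(1) assms(1)] by blast
  then show ?thesis
    using overlap_iff_bot_of_le[OF assms(3) uz assms(1)] by blast
qed

section \<open>Transport between blocks\<close>

definition next_index where
  "next_index x y = (GREATEST z. x \<le> z \<and> z \<le> y \<and> overlap x z)"

lemma next_index:
  assumes "x \<le> y"
  shows "x \<le> next_index x y \<and> next_index x y \<le> y \<and> overlap x (next_index x y) \<and>
    (\<forall>z. x \<le> z \<and> z \<le> y \<and> overlap x z \<longrightarrow> z \<le> next_index x y)"
proof -
  let ?Z = "{z. x \<le> z \<and> z \<le> y \<and> overlap x z}"
  have "x \<in> ?Z"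
    using assms bot_of_in by blast
  moreover have "sup a b \<in> ?Z" if "a \<in> ?Z" "b \<in> ?Z" for a b
  proof -
    have "top_of x \<in> C (sup a b)"
      using that overlap_top_of overlap_inf_sup by blast
    then show ?thesis
      using that top_of_in by (auto intro: le_supI1)
  qed
  ultimately obtain m where m: "m \<in> ?Z" "\<forall>z \<in> ?Z. z \<le> m"
    using sup_closed_ex_greatest[of x ?Z] by blast
  show ?thesis
    unfolding next_index_def by (rule GreatestI2_order[of _ m]) (use m in auto)
qed

lemma next_index_gt:
  assumes "x < y"
  shows "x < next_index x y"
proof -
  obtain z where sc: "scovers x z" and "z \<le> y"
    using ex_scovers[OF assms] by blast
  moreover have "x < z"
    using sc unfolding scovers_def by blast
  ultimately have "z \<le> next_index x y"
    using next_index[of x y] scovers_overlap[OF sc] assms by simp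
  then show ?thesis
    using \<open>x < z\<close> by simp
qed

lemma next_index_step:
  assumes "x < y"
  shows "(next_index x y, x) \<in> {(x, y). y < x}" "x \<le> next_index x y" "next_index x y \<le> y"
    "overlap x (next_index x y)"
  using next_index_gt[OF assms] next_index[of x y] assms by auto

lemma next_index_greatest: "x \<le> z \<Longrightarrow> z \<le> y \<Longrightarrow> overlap x z \<Longrightarrow> z \<le> next_index x y"
  using next_index[of x y] by auto

definition push where "push x z r = bjoin x r (bot_of z)"

lemma push_in:
  assumes "x \<le> z" "overlap x z" "r \<in> C x"
  shows "push x z r \<in> C x" "push x z r \<in> C z"
proof -
  have b: "bot_of z \<in> C x"
    using overlap_bot_of[OF assms(1,2)] .
  show "push x z r \<in> C x"
    unfolding push_def using block_join_in[OF assms(3) b] .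
  moreover have "R x (bot_of z) (push x z r)"
    unfolding push_def using block_join_upper2[OF assms(3) b] .
  ultimately show "push x z r \<in> C z"
    using overlap_iff_bot_of_le[OF assms(1,2)] by blast
qed

lemma push_ge:
  assumes "x \<le> z" "overlap x z" "r \<in> C x"
  shows "R x r (push x z r)"
  unfolding push_def using block_join_upper1[OF assms(3) overlap_bot_of[OF assms(1,2)]] .

lemma push_id:
  assumes "x \<le> z" "r \<in> C x" "r \<in> C z"
  shows "push x z r = r"
proof -
  have ov: "overlap x z"
    using assms by blast
  have b: "bot_of z \<in> C x"
    using overlap_bot_of[OF assms(1) ov] .
  have "R x (bot_of z) r"
    using overlap_iff_bot_of_le[OF assms(1) ov assms(2)] assms(3) by blast
  then show ?thesis
    unfolding push_def using block_join_commute[OF assms(2) b] block_join_absorb2[OF b assms(2)] by simp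
qed

lemma push_mono:
  assumes "x \<le> z" "overlap x z" "r \<in> C x" "r' \<in> C x" "R x r r'"
  shows "R x (push x z r) (push x z r')"
proof -
  have b: "bot_of z \<in> C x"
    using overlap_bot_of[OF assms(1,2)] .
  have p: "push x z r' \<in> C x"
    using push_in[OF assms(1,2,4)] by blast
  have "R x r (push x z r')"
    using block_trans[OF assms(3,4) p assms(5) push_ge[OF assms(1,2,4)]] .
  moreover have "R x (bot_of z) (push x z r')"
    unfolding push_def using block_join_upper2[OF assms(4) b] .
  ultimately show ?thesis
    unfolding push_def using block_join_least[OF assms(3) b] p[unfolded push_def] by blast
qed

lemma push_join:
  assumes "x \<le> z" "overlap x z" "r \<in> C x" "r' \<in> C x"
  shows "push x z (bjoin x r r') = bjoin x (push x z r) (push x z r')"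
  unfolding push_def using block_join_join_distrib[OF assms(3,4) overlap_bot_of[OF assms(1,2)]] .

lemma push_push:
  assumes "x \<le> z" "z \<le> w" "overlap x w" "r \<in> C x"
  shows "push z w (push x z r) = push x w r"
proof -
  have xz: "overlap x z" and zw: "overlap z w"
    using overlap_between[OF assms(1-3)] overlap_between'[OF assms(1-3)] .
  have p: "push x z r \<in> C x" "push x z r \<in> C z"
    using push_in[OF assms(1) xz assms(4)] by blast+
  have bwx: "bot_of w \<in> C x" and bwz: "bot_of w \<in> C z" and bzx: "bot_of z \<in> C x"
    using overlap_bot_of order.trans[OF assms(1,2)] assms(1-3) xz zw by blast+
  have "R x (bot_of z) (bot_of w)"
    using bot_of_le[OF bwz] block_le_agree[OF bzx bot_of_in bwx bwz] by blast
  then have "bjoin x (bot_of z) (bot_of w) = bot_of w"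
    using block_join_absorb2[OF bzx bwx] by blast
  moreover have "push z w (push x z r) = bjoin x (push x z r) (bot_of w)"
    unfolding push_def[of z] using block_join_agree[OF p(2) p(1) bwz bwx] .
  ultimately show ?thesis
    unfolding push_def using block_join_assoc[OF assms(4) bzx bwx] by simp
qed

function transport :: "'s \<Rightarrow> 's \<Rightarrow> 'a \<Rightarrow> 'a" where
  "transport y x r =
    (if x < y then transport y (next_index x y) (push x (next_index x y) r) else r)"
  by auto
termination
  by (relation "inv_image {(x, y). y < x} (\<lambda>(y, x, r). x)") (auto intro: wf_S_greater next_index_gt)

declare transport.simps[simp del]

abbreviation block_step where "block_step a b \<equiv> \<exists>x. a \<in> C x \<and> b \<in> C x \<and> R x a b"

lemma transport_base: "\<not> x < y \<Longrightarrow> transport y x r = r"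
  by (subst transport.simps) simp

lemma transport_step:
  "x < y \<Longrightarrow> transport y x r = transport y (next_index x y) (push x (next_index x y) r)"
  by (subst transport.simps) simp

lemma transport_in: "x \<le> y \<Longrightarrow> r \<in> C x \<Longrightarrow> transport y x r \<in> C y"
proof (induction x arbitrary: r rule: wf_induct_rule[OF wf_S_greater])
  case (1 x r)
  show ?case
  proof (cases "x < y")
    case False
    then show ?thesis
      using "1.prems" transport_base by simp
  next
    case True
    note m = next_index_step[OF True]
    have "push x (next_index x y) r \<in> C (next_index x y)"
      using push_in[OF m(2,4) "1.prems"(2)] by blast
    then show ?thesis
      using "1.IH"[OF m(1) m(3)] transport_step[OF True] by simp
  qed
qed

lemma transport_reachable: "x \<le> y \<Longrightarrow> r \<in> C x \<Longrightarrow> block_step\<^sup>*\<^sup>* r (transport y x r)"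
proof (induction x arbitrary: r rule: wf_induct_rule[OF wf_S_greater])
  case (1 x r)
  show ?case
  proof (cases "x < y")
    case False
    then show ?thesis
      using transport_base by simp
  next
    case True
    note m = next_index_step[OF True]
    have p: "push x (next_index x y) r \<in> C x" "push x (next_index x y) r \<in> C (next_index x y)"
      using push_in[OF m(2,4) "1.prems"(2)] by blast+
    then have "block_step r (push x (next_index x y) r)"
      using push_ge[OF m(2,4) "1.prems"(2)] "1.prems"(2) by blast
    from this "1.IH"[OF m(1) m(3) p(2)] have "block_step\<^sup>*\<^sup>* r (transport y (next_index x y) (push x (next_index x y) r))"
      by (rule converse_rtranclp_into_rtranclp)
    then show ?thesis
      using transport_step[OF True] by simp
  qed
qed

lemma transport_push:
  "x \<le> z \<Longrightarrow> z \<le> y \<Longrightarrow> overlap x z \<Longrightarrow> r \<in> C x \<Longrightarrow> transport y z (push x z r) = transport y x r"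
proof (induction x arbitrary: z r rule: wf_induct_rule[OF wf_S_greater])
  case (1 x z r)
  show ?case
  proof (cases "z = x")
    case True
    then show ?thesis
      using push_id[of x x r] "1.prems" by simp
  next
    case False
    then have xz: "x < z" and xy: "x < y"
      using "1.prems" by auto
    note m = next_index_step[OF xy]
    text \<open>Pushing first to \<open>z\<close> and then on to \<open>next_index x y\<close> is one push, because
      \<open>z \<le> next_index x y\<close> by maximality.\<close>
    have zm: "z \<le> next_index x y"
      using next_index_greatest "1.prems" by blast
    have "transport y (next_index x y) (push z (next_index x y) (push x z r)) = transport y z (push x z r)"
      using "1.IH"[of z "next_index x y" "push x z r"] xz zm m(3) push_in[OF "1.prems"(1,3,4)]
        overlap_between'[OF "1.prems"(1) zm m(4)] by simp
    moreover have "push z (next_index x y) (push x z r) = push x (next_index x y) r"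
      using push_push[OF "1.prems"(1) zm m(4) "1.prems"(4)] .
    ultimately show ?thesis
      using transport_step[OF xy] by simp
  qed
qed

lemma transport_mono:
  "x \<le> y \<Longrightarrow> r \<in> C x \<Longrightarrow> r' \<in> C x \<Longrightarrow> R x r r' \<Longrightarrow> R y (transport y x r) (transport y x r')"
proof (induction x arbitrary: r r' rule: wf_induct_rule[OF wf_S_greater])
  case (1 x r r')
  show ?case
  proof (cases "x < y")
    case False
    then show ?thesis
      using "1.prems" transport_base by simp
  next
    case True
    note m = next_index_step[OF True]
    let ?s = "push x (next_index x y) r" and ?s' = "push x (next_index x y) r'"
    have s: "?s \<in> C x" "?s \<in> C (next_index x y)" "?s' \<in> C x" "?s' \<in> C (next_index x y)"
      using push_in[OF m(2,4)] "1.prems" by blast+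
    have "R (next_index x y) ?s ?s'"
      using push_mono[OF m(2,4) "1.prems"(2-4)] block_le_agree[OF s] by blast
    then show ?thesis
      using "1.IH"[OF m(1) m(3) s(2,4)] transport_step[OF True] by simp
  qed
qed

lemma transport_join:
  "x \<le> y \<Longrightarrow> r \<in> C x \<Longrightarrow> r' \<in> C x \<Longrightarrow>
    transport y x (bjoin x r r') = bjoin y (transport y x r) (transport y x r')"
proof (induction x arbitrary: r r' rule: wf_induct_rule[OF wf_S_greater])
  case (1 x r r')
  show ?case
  proof (cases "x < y")
    case False
    then show ?thesis
      using "1.prems" transport_base by simp
  next
    case True
    note m = next_index_step[OF True]
    let ?s = "push x (next_index x y) r" and ?s' = "push x (next_index x y) r'"
    have s: "?s \<in> C x" "?s \<in> C (next_index x y)" "?s' \<in> C x" "?s' \<in> C (next_index x y)"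
      using push_in[OF m(2,4)] "1.prems" by blast+
    have "push x (next_index x y) (bjoin x r r') = bjoin (next_index x y) ?s ?s'"
      using push_join[OF m(2,4) "1.prems"(2,3)] block_join_agree[OF s] by simp
    then show ?thesis
      using "1.IH"[OF m(1) m(3) s(2,4)] transport_step[OF True] by simp
  qed
qed

lemma transport_id:
  assumes "x \<le> y" "r \<in> C x" "r \<in> C y"
  shows "transport y x r = r"
proof -
  have "transport y y (push x y r) = transport y x r"
    using transport_push[OF assms(1) order.refl _ assms(2)] assms(2,3) by blast
  then show ?thesis
    using push_id[OF assms] transport_base[of y y] by simp
qed

lemma transport_independent:
  assumes "r \<in> C x" "r \<in> C x'" "x \<le> y" "x' \<le> y"
  shows "transport y x r = transport y x' r"
proof -
  let ?w = "inf x x'"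
  have w: "r \<in> C ?w" "?w \<le> x" "?w \<le> x'"
    using overlap_inf_sup assms(1,2) by auto
  have "overlap ?w x" "overlap ?w x'"
    using w(1) assms(1,2) by blast+
  then have "transport y x r = transport y ?w r" "transport y x' r = transport y ?w r"
    using transport_push[OF w(2) assms(3) _ w(1)] push_id[OF w(2) w(1) assms(1)]
      transport_push[OF w(3) assms(4) _ w(1)] push_id[OF w(3) w(1) assms(2)] by simp_all
  then show ?thesis
    by simp
qed

lemma transport_transport:
  "x \<le> y \<Longrightarrow> y \<le> v \<Longrightarrow> r \<in> C x \<Longrightarrow> transport v y (transport y x r) = transport v x r"
proof (induction x arbitrary: r rule: wf_induct_rule[OF wf_S_greater])
  case (1 x r)
  show ?case
  proof (cases "x < y")
    case False
    then show ?thesis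
      using "1.prems" transport_base by simp
  next
    case True
    note m = next_index_step[OF True]
    have s: "push x (next_index x y) r \<in> C (next_index x y)"
      using push_in[OF m(2,4) "1.prems"(3)] by blast
    have "transport v (next_index x y) (push x (next_index x y) r) = transport v x r"
      using transport_push[OF m(2) _ m(4) "1.prems"(3)] m(3) "1.prems"(2) by simp
    then show ?thesis
      using "1.IH"[OF m(1) m(3) "1.prems"(2) s] transport_step[OF True] by simp
  qed
qed

lemma transport_bot_of: "x \<le> y \<Longrightarrow> transport y x (bot_of x) = bot_of y"
proof (induction x rule: wf_induct_rule[OF wf_S_greater])
  case (1 x)
  show ?case
  proof (cases "x < y")
    case False
    then show ?thesis
      using "1.prems" transport_base by simp
  next
    case True
    note m = next_index_step[OF True]
    have bm: "bot_of (next_index x y) \<in> C x"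
      using overlap_bot_of[OF m(2,4)] .
    have "push x (next_index x y) (bot_of x) = bot_of (next_index x y)"
      unfolding push_def using block_join_absorb2[OF bot_of_in bm bot_of_le[OF bm]] .
    then show ?thesis
      using "1.IH"[OF m(1) m(3)] transport_step[OF True] by simp
  qed
qed

section \<open>The glued sum\<close>

abbreviation L where "L \<equiv> glued_carrier C"
abbreviation Lle where "Lle \<equiv> glued_le C R"

lemma Lle_eq: "Lle = block_step\<^sup>+\<^sup>+"
  unfolding glued_le_def ..

lemma in_L_iff: "a \<in> L \<longleftrightarrow> (\<exists>x. a \<in> C x)"
  unfolding glued_carrier_def by blast

lemma Lle_in_L: "Lle a b \<Longrightarrow> a \<in> L \<and> b \<in> L"
  unfolding Lle_eq by (induction rule: tranclp_induct) (auto simp: in_L_iff)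

lemma block_step_lowest:
  assumes "block_step a b"
  shows "a \<in> C (lowest b) \<and> R (lowest b) a b"
proof -
  obtain x where x: "a \<in> C x" "b \<in> C x" "R x a b"
    using assms by blast
  have a: "a \<in> C (lowest b)"
    using overlap_down_closed[OF lowest(2)[OF x(2)] lowest(1)[OF x(2)] x(2,1,3)] .
  then show ?thesis
    using block_le_agree[OF x(1) a x(2) lowest(1)[OF x(2)]] x(3) by blast
qed

lemma block_step_highest:
  assumes "block_step a b"
  shows "b \<in> C (highest a) \<and> R (highest a) a b"
proof -
  obtain x where x: "a \<in> C x" "b \<in> C x" "R x a b"
    using assms by blast
  have b: "b \<in> C (highest a)"
    using overlap_up_closed[OF highest(2)[OF x(1)] x(1) highest(1)[OF x(1)] x(2,3)] .
  then show ?thesis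
    using block_le_agree[OF x(1) highest(1)[OF x(1)] x(2) b] x(3) by blast
qed

lemma Lle_lowest_highest_mono:
  assumes "Lle a b"
  shows "lowest a \<le> lowest b \<and> highest a \<le> highest b"
proof -
  have "lowest a \<le> lowest b \<and> highest a \<le> highest b" if "block_step a b" for a b
    using block_step_lowest[OF that] block_step_highest[OF that] lowest(2) highest(2) by blast
  with assms show ?thesis
    unfolding Lle_eq by (induction rule: tranclp_induct) (blast intro: order.trans)+
qed

definition proj where "proj y a = transport y (lowest a) a"

lemma proj_in: "a \<in> C x \<Longrightarrow> lowest a \<le> y \<Longrightarrow> proj y a \<in> C y"
  unfolding proj_def using transport_in lowest(1) by blast

lemma proj_self:
  assumes "a \<in> C y"
  shows "proj y a = a"
  unfolding proj_def using transport_id[OF lowest(2)[OF assms] lowest(1)[OF assms] assms] .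

lemma proj_eq_transport:
  assumes "a \<in> C x" "x \<le> y"
  shows "proj y a = transport y x a"
  unfolding proj_def using transport_independent[OF lowest(1) assms(1)] lowest(2) assms order.trans by blast

lemma block_step_proj_le:
  assumes "block_step a e" "lowest e \<le> y"
  shows "lowest a \<le> y \<and> R y (proj y a) (proj y e)"
proof -
  let ?v = "lowest e"
  have a: "a \<in> C ?v" "R ?v a e" and e: "e \<in> C ?v"
    using block_step_lowest[OF assms(1)] assms(1) lowest(1) by blast+
  have "R y (transport y ?v a) (transport y ?v e)"
    using transport_mono[OF assms(2) a(1) e a(2)] .
  moreover have "proj y a = transport y ?v a" "proj y e = transport y ?v e"
    using proj_eq_transport[OF a(1) assms(2)] proj_def by simp_all
  ultimately show ?thesis
    using order.trans[OF lowest(2)[OF a(1)] assms(2)] by simp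
qed

lemma Lle_imp_proj_le:
  assumes "Lle a c" "c \<in> C y"
  shows "lowest a \<le> y \<and> R y (proj y a) c"
  using assms(1) unfolding Lle_eq
proof (induction rule: converse_tranclp_induct)
  case (base a)
  then show ?case
    using block_step_proj_le[OF base lowest(2)[OF assms(2)]] proj_self[OF assms(2)] by simp
next
  case (step a e)
  then have ay: "lowest a \<le> y" and ae: "R y (proj y a) (proj y e)" and ey: "lowest e \<le> y"
    using block_step_proj_le by blast+
  have "a \<in> C (lowest e)" "e \<in> C (lowest e)"
    using block_step_lowest[OF step(1)] step(1) lowest(1) by blast+
  then have "R y (proj y a) c"
    using block_trans[OF proj_in proj_in assms(2)] ae ay ey step(3) by blast
  then show ?case
    using ay by blast
qed

lemma proj_le_imp_Lle:
  assumes "a \<in> C x" "c \<in> C y" "lowest a \<le> y" "R y (proj y a) c"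
  shows "Lle a c"
proof -
  have "block_step\<^sup>*\<^sup>* a (proj y a)"
    unfolding proj_def using transport_reachable[OF assms(3) lowest(1)[OF assms(1)]] .
  moreover have "block_step (proj y a) c"
    using proj_in[OF assms(1,3)] assms(2,4) by blast
  ultimately show ?thesis
    unfolding Lle_eq by (rule rtranclp_into_tranclp1)
qed

lemma Lle_iff_block_le:
  assumes "a \<in> C y" "c \<in> C y"
  shows "Lle a c \<longleftrightarrow> R y a c"
proof
  assume "Lle a c"
  then show "R y a c"
    using Lle_imp_proj_le[OF _ assms(2)] proj_self[OF assms(1)] by metis
next
  assume "R y a c"
  then have "block_step a c"
    using assms by blast
  then show "Lle a c"
    unfolding Lle_eq by blast
qed

lemma order_on_L: "order_on L Lle"
  unfolding order_on_def
proof (intro conjI ballI impI)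
  fix a assume "a \<in> L"
  then show "Lle a a"
    using Lle_iff_block_le block_refl by (metis in_L_iff)
next
  fix a b assume "Lle a b \<and> Lle b a"
  then have ab: "Lle a b" "Lle b a"
    by blast+
  then have "lowest a = lowest b"
    using Lle_lowest_highest_mono by (blast intro: order.antisym)
  moreover obtain x y where "a \<in> C x" "b \<in> C y"
    using Lle_in_L[OF ab(1)] in_L_iff by blast
  ultimately have "a \<in> C (lowest b)" "b \<in> C (lowest b)"
    using lowest(1) by metis+
  then show "a = b"
    using Lle_iff_block_le ab block_antisym by meson
next
  fix a b c assume "Lle a b \<and> Lle b c"
  then show "Lle a c"
    unfolding Lle_eq by (blast intro: tranclp_trans)
qed

lemma proj_proj:
  assumes "a \<in> C x" "lowest a \<le> y" "y \<le> v"
  shows "transport v y (proj y a) = proj v a"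
  unfolding proj_def using transport_transport[OF assms(2,3) lowest(1)[OF assms(1)]] .

lemma is_lub_L:
  assumes a: "a \<in> C x" and b: "b \<in> C x'"
  defines "y \<equiv> sup (lowest a) (lowest b)"
  shows "is_lub L Lle a b (bjoin y (proj y a) (proj y b))"
  unfolding is_lub_def
proof (intro conjI ballI impI)
  have a_y: "lowest a \<le> y" and b_y: "lowest b \<le> y"
    unfolding y_def by simp_all
  have pa: "proj y a \<in> C y" and pb: "proj y b \<in> C y"
    using proj_in a b a_y b_y by blast+
  let ?j = "bjoin y (proj y a) (proj y b)"
  have j: "?j \<in> C y"
    using block_join_in[OF pa pb] .
  then show "?j \<in> L"
    using in_L_iff by blast
  show "Lle a ?j"
    using proj_le_imp_Lle[OF a j a_y] block_join_upper1[OF pa pb] by blast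
  show "Lle b ?j"
    using proj_le_imp_Lle[OF b j b_y] block_join_upper2[OF pa pb] by blast
  fix w assume "w \<in> L" and "Lle a w \<and> Lle b w"
  then obtain v where w: "w \<in> C v" and aw: "Lle a w" and bw: "Lle b w"
    using in_L_iff by blast
  have av: "lowest a \<le> v" "R v (proj v a) w" and bv: "lowest b \<le> v" "R v (proj v b) w"
    using Lle_imp_proj_le[OF aw w] Lle_imp_proj_le[OF bw w] by blast+
  have yv: "y \<le> v"
    unfolding y_def using av(1) bv(1) by simp
  have "R v (bjoin v (transport v y (proj y a)) (transport v y (proj y b))) w"
    using block_join_least[OF proj_in[OF a av(1)] proj_in[OF b bv(1)] w] av(2) bv(2)
      proj_proj[OF a a_y yv] proj_proj[OF b b_y yv] by simp
  then have "R v (transport v y ?j) w"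
    using transport_join[OF yv pa pb] by simp
  moreover have "proj v ?j = transport v y ?j"
    using proj_eq_transport[OF j yv] .
  moreover have "lowest ?j \<le> v"
    using order.trans[OF lowest(2)[OF j] yv] .
  ultimately show "Lle ?j w"
    using proj_le_imp_Lle[OF j w] by simp
qed

lemma block_join_is_lub:
  assumes b: "b \<in> C u" and c: "c \<in> C u"
  shows "is_lub L Lle b c (bjoin u b c)"
proof -
  let ?y = "sup (lowest b) (lowest c)"
  have yu: "?y \<le> u"
    using lowest(2)[OF b] lowest(2)[OF c] by simp
  have b_y: "b \<in> C ?y" and cy: "c \<in> C ?y"
    using block_convex[OF lowest(1)[OF b] b _ yu] block_convex[OF lowest(1)[OF c] c _ yu] by simp_all
  have "bjoin u b c = bjoin ?y (proj ?y b) (proj ?y c)"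
    using block_join_agree[OF b b_y c cy] proj_self[OF b_y] proj_self[OF cy] by simp
  then show ?thesis
    using is_lub_L[OF b c] by simp
qed

lemma block_meet_is_glb:
  assumes b: "b \<in> C u" and c: "c \<in> C u"
  shows "is_glb L Lle b c (bmeet u b c)"
  unfolding is_glb_def
proof (intro conjI ballI impI)
  have m: "bmeet u b c \<in> C u"
    using block_meet_in[OF b c] .
  then show "bmeet u b c \<in> L"
    using in_L_iff by blast
  show "Lle (bmeet u b c) b" "Lle (bmeet u b c) c"
    using Lle_iff_block_le[OF m b] Lle_iff_block_le[OF m c] block_meet_lower1[OF b c]
      block_meet_lower2[OF b c] by blast+
  fix w assume "w \<in> L" and "Lle w b \<and> Lle w c"
  then obtain x where w: "w \<in> C x" and wb: "Lle w b" and wc: "Lle w c"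
    using in_L_iff by blast
  have "lowest w \<le> u" "R u (proj u w) b" "R u (proj u w) c"
    using Lle_imp_proj_le[OF wb b] Lle_imp_proj_le[OF wc c] by blast+
  then show "Lle w (bmeet u b c)"
    using proj_le_imp_Lle[OF w m] block_meet_greatest[OF b c proj_in[OF w]] by blast
qed

lemma ex_bot_L: "\<exists>B \<in> L. \<forall>a \<in> L. Lle B a"
proof -
  obtain s :: 's where s: "\<And>x. s \<le> x"
    using inf_closed_ex_least[of undefined UNIV] by blast
  have B: "bot_of s \<in> C s"
    using bot_of_in .
  have "Lle (bot_of s) a" if "a \<in> C x" for a x
  proof -
    have "lowest (bot_of s) \<le> x"
      using order.trans[OF lowest(2)[OF B] s] .
    moreover have "proj x (bot_of s) = bot_of x"
      using proj_eq_transport[OF B s] transport_bot_of[OF s] by simp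
    ultimately show ?thesis
      using proj_le_imp_Lle[OF B that] bot_of_le[OF that] by simp
  qed
  then show ?thesis
    using B in_L_iff by blast
qed

lemma finite_length_L: "finite_length L Lle"
  unfolding finite_length_def
proof (intro allI impI)
  fix Ch assume Ch: "Ch \<subseteq> L \<and> (\<forall>a \<in> Ch. \<forall>b \<in> Ch. Lle a b \<or> Lle b a)"
  text \<open>\<open>lowest\<close> maps the chain to a chain of \<open>S\<close>, and each fibre is a chain in one block.\<close>
  have "finite (lowest ` Ch)"
  proof -
    have "\<forall>u \<in> lowest ` Ch. \<forall>v \<in> lowest ` Ch. u \<le> v \<or> v \<le> u"
      using Ch Lle_lowest_highest_mono by blast
    then show ?thesis
      using S_finite_length unfolding finite_length_def by blast
  qed
  moreover have "finite {a \<in> Ch. lowest a = v}" for v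
  proof -
    have sub: "{a \<in> Ch. lowest a = v} \<subseteq> C v"
      using Ch lowest(1) in_L_iff by blast
    then have "\<forall>a \<in> {a \<in> Ch. lowest a = v}. \<forall>b \<in> {a \<in> Ch. lowest a = v}. R v a b \<or> R v b a"
      using Ch Lle_iff_block_le by blast
    then show ?thesis
      using finite_length_lattice.fin[OF block] sub unfolding finite_length_def by blast
  qed
  moreover have "Ch \<subseteq> (\<Union>v \<in> lowest ` Ch. {a \<in> Ch. lowest a = v})"
    by blast
  ultimately show "finite Ch"
    by (meson finite_UN_I finite_subset)
qed

lemma fl_lattice_L: "fl_lattice L Lle"
  unfolding fl_lattice_def lattice_on_def
proof (intro conjI ballI)
  obtain B where B: "B \<in> L" "\<forall>a \<in> L. Lle B a"
    using ex_bot_L by blast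
  then show "L \<noteq> {}"
    by blast
  have lub: "\<exists>z. is_lub L Lle a b z" if "a \<in> L" "b \<in> L" for a b
    using is_lub_L that in_L_iff by blast
  fix a b assume "a \<in> L" "b \<in> L"
  then show "\<exists>z. is_lub L Lle a b z" "\<exists>z. is_glb L Lle a b z"
    using lub finite_length_ex_glb[OF order_on_L finite_length_L B lub] by blast+
qed (fact order_on_L finite_length_L)+

lemma L_join_eq: "b \<in> C u \<Longrightarrow> c \<in> C u \<Longrightarrow> ljoin L Lle b c = bjoin u b c"
  using finite_length_lattice.join_eq[OF _ block_join_is_lub] fl_lattice_L in_L_iff
  unfolding finite_length_lattice_def by blast

lemma L_meet_eq: "b \<in> C u \<Longrightarrow> c \<in> C u \<Longrightarrow> lmeet L Lle b c = bmeet u b c"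
  using finite_length_lattice.meet_eq[OF _ block_meet_is_glb] fl_lattice_L in_L_iff
  unfolding finite_length_lattice_def by blast

lemma covers_L_imp_block_step:
  assumes "covers L Lle a b"
  shows "block_step a b"
proof -
  have ab: "Lle a b" "a \<noteq> b"
    using assms unfolding covers_def by blast+
  then obtain e where e: "block_step a e" "e \<noteq> a" "e = b \<or> Lle e b"
    using tranclp_first_step[of block_step a b] unfolding Lle_eq by blast
  have "Lle a e" "e \<in> L"
    using e(1) Lle_in_L unfolding Lle_eq by blast+
  then have "e = b"
    using assms e(2,3) unfolding covers_def by blast
  then show ?thesis
    using e(1) by simp
qed

lemma block_interval_closed:
  assumes "a \<in> C u" "c \<in> C u" "Lle a e" "Lle e c"
  shows "e \<in> C u"
proof -
  obtain x where e: "e \<in> C x"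
    using Lle_in_L[OF assms(3)] in_L_iff by blast
  have "lowest e \<le> u"
    using Lle_lowest_highest_mono[OF assms(4)] lowest(2)[OF assms(2)] by (blast intro: order.trans)
  moreover have "u \<le> highest e"
    using Lle_lowest_highest_mono[OF assms(3)] highest(2)[OF assms(1)] by (blast intro: order.trans)
  ultimately show ?thesis
    using block_convex[OF lowest(1)[OF e] highest(1)[OF e]] by blast
qed

lemma covers_L_iff_covers_block:
  assumes a: "a \<in> C u" and b: "b \<in> C u"
  shows "covers L Lle a b \<longleftrightarrow> covers (C u) (R u) a b"
proof -
  have "(\<exists>z \<in> L. Lle a z \<and> Lle z b \<and> z \<noteq> a \<and> z \<noteq> b) \<longleftrightarrow>
      (\<exists>z \<in> C u. R u a z \<and> R u z b \<and> z \<noteq> a \<and> z \<noteq> b)"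
    using block_interval_closed[OF a b] Lle_iff_block_le a b in_L_iff by meson
  then show ?thesis
    unfolding covers_def using Lle_iff_block_le[OF a b] a b in_L_iff by blast
qed

lemma semimodular_L:
  assumes sm: "\<forall>x. semimodular_on (C x) (R x)"
  shows "semimodular_on L Lle"
  unfolding semimodular_on_def
proof (intro allI impI)
  fix a b c assume h: "covers L Lle a b \<and> covers L Lle a c \<and> b \<noteq> c"
  let ?u = "highest a"
  have a: "a \<in> C ?u" and b: "b \<in> C ?u" and c: "c \<in> C ?u"
    using h covers_L_imp_block_step block_step_highest highest(1) by blast+
  then have "covers (C ?u) (R ?u) a b" "covers (C ?u) (R ?u) a c"
    using h covers_L_iff_covers_block by blast+
  then have "covers (C ?u) (R ?u) b (bjoin ?u b c) \<and> covers (C ?u) (R ?u) c (bjoin ?u b c)"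
    using sm h unfolding semimodular_on_def by blast
  then show "covers L Lle b (ljoin L Lle b c) \<and> covers L Lle c (ljoin L Lle b c)"
    using L_join_eq[OF b c] covers_L_iff_covers_block block_join_in[OF b c] b c by metis
qed

lemma lower_semimodular_L:
  assumes sm: "\<forall>x. semimodular_on (C x) (\<lambda>p q. R x q p)"
  shows "semimodular_on L (\<lambda>p q. Lle q p)"
  unfolding semimodular_on_def covers_converse[of L Lle] ljoin_converse[of L Lle]
proof (intro allI impI)
  fix a b c assume h: "covers L Lle b a \<and> covers L Lle c a \<and> b \<noteq> c"
  let ?u = "lowest a"
  have a: "a \<in> C ?u" and b: "b \<in> C ?u" and c: "c \<in> C ?u"
    using h covers_L_imp_block_step block_step_lowest lowest(1) by blast+
  then have "covers (C ?u) (R ?u) b a" "covers (C ?u) (R ?u) c a"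
    using h covers_L_iff_covers_block by blast+
  then have "covers (C ?u) (R ?u) (bmeet ?u b c) b \<and> covers (C ?u) (R ?u) (bmeet ?u b c) c"
    using finite_length_lattice.lower_semimodularD[OF block sm[rule_format]] h by blast
  then show "covers L Lle (lmeet L Lle b c) b \<and> covers L Lle (lmeet L Lle b c) c"
    using L_meet_eq[OF b c] covers_L_iff_covers_block block_meet_in[OF b c] b c by metis
qed

end

theorem theorem3p2:
  fixes C :: "'s::lattice \<Rightarrow> 'a set" and R :: "'s \<Rightarrow> 'a \<Rightarrow> 'a \<Rightarrow> bool"
  assumes S_fl: "finite_length (UNIV :: 's set) (\<le>)"
    and glued: "glued_system C R"
  shows "((\<forall>x. semimodular_on (C x) (R x)) \<longrightarrow>
            fl_lattice (glued_carrier C) (glued_le C R) \<and>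
            semimodular_on (glued_carrier C) (glued_le C R)) \<and>
         ((\<forall>x. modular_on (C x) (R x)) \<longrightarrow>
            fl_lattice (glued_carrier C) (glued_le C R) \<and>
            modular_on (glued_carrier C) (glued_le C R))"
proof -
  interpret glued_sum C R
    using S_fl glued by (rule glued_sum.intro)
  interpret L: finite_length_lattice "glued_carrier C" "glued_le C R"
    using fl_lattice_L by (rule finite_length_lattice.intro)
  have "modular_on (glued_carrier C) (glued_le C R)" if "\<forall>x. modular_on (C x) (R x)"
  proof -
    have "semimodular_on (C x) (R x)" "semimodular_on (C x) (\<lambda>p q. R x q p)" for x
      using finite_length_lattice.modular_imp_semimodular[OF block]
        finite_length_lattice.modular_imp_lower_semimodular[OF block] that by blast+
    then show ?thesis
      using L.bisemimodular_imp_modular semimodular_L lower_semimodular_L by blast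
  qed
  then show ?thesis
    using fl_lattice_L semimodular_L by blast
qed

end
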